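(* Let $d\ge 3$. For $(i,j)\in\mathbb{Z}_d\times\mathbb{Z}_d$ with $i\neq 0$ define $$\mathcal{C}_{i,j}=\{(x,y)\in\mathbb{Z}_d\times\mathbb{Z}_d:\ iy-jx\equiv 0 \pmod d,\ x\in i\mathbb{Z}_d\},$$ where $i\mathbb{Z}_d=\{ik \bmod d: k\in\mathbb{Z}_d\}$, and define $\mathcal{C}_{0,0}=\{(0,y):y\in\mathbb{Z}_d\}$. Then: (1) for every $i\ne 0$ and every $j$, $\mathcal{C}_{i,j}$ is a maximally commutative set with exactly $d$ elements; (2) every maximally commutative set in $\mathbb{Z}_d\times\mathbb{Z}_d$ equals $\mathcal{C}_{0,0}$ or $\mathcal{C}_{i,j}$ for some $i\ne 0$; (3) the sets in $$\mathcal{MCS}_d=\{\mathcal{C}_{i,j}: 1\le i<d,\ i\mid d,\ 0\le j\le d/i-1\}\cup\{\mathcal{C}_{0,0}\}$$ are pairwise distinct and are exactly all the maximally commutative sets; in particular the number of maximally commutative sets is $\sigma(d)$, the sum of all positive divisors of $d$.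
   Context: $\mathbb{Z}_d=\{0,1,\dots,d-1\}$ with addition and multiplication mod $d$. Two pairs $(m,n),(m',n')\in\mathbb{Z}_d\times\mathbb{Z}_d$ are said to commute if $mn'-nm'\equiv 0 \pmod d$ (equivalently the generalized Pauli matrices $X^mZ^n$ and $X^{m'}Z^{n'}$ commute, where $X=\sum_i|i+1\bmod d\rangle\langle i|$, $Z=\sum_i e^{2\pi\sqrt{-1}i/d}|i\rangle\langle i|$). A subset $\mathcal{C}\subseteq\mathbb{Z}_d\times\mathbb{Z}_d$ is a maximally commutative set (MCS) if any two of its elements commute and no element of $(\mathbb{Z}_d\times\mathbb{Z}_d)\setminus\mathcal{C}$ commutes with every element of $\mathcal{C}$. $\sigma(d)=\sum_{k\mid d,\,k\ge1}k$. *)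

theory Defs
  imports Main
begin

definition Zd :: "nat \<Rightarrow> nat set" where
  "Zd d = {0..<d}"

definition commutes :: "nat \<Rightarrow> nat \<times> nat \<Rightarrow> nat \<times> nat \<Rightarrow> bool" where
  "commutes d p q \<longleftrightarrow> (int (fst p) * int (snd q) - int (snd p) * int (fst q)) mod int d = 0"

definition is_MCS :: "nat \<Rightarrow> (nat \<times> nat) set \<Rightarrow> bool" where
  "is_MCS d C \<longleftrightarrow> C \<subseteq> Zd d \<times> Zd d
     \<and> (\<forall>p\<in>C. \<forall>q\<in>C. commutes d p q)
     \<and> (\<forall>p \<in> (Zd d \<times> Zd d) - C. \<not> (\<forall>q\<in>C. commutes d p q))"

definition mult_set :: "nat \<Rightarrow> nat \<Rightarrow> nat set" where
  "mult_set d i = {(i * k) mod d | k. k \<in> Zd d}"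

definition Cset :: "nat \<Rightarrow> nat \<Rightarrow> nat \<Rightarrow> (nat \<times> nat) set" where
  "Cset d i j = {(x, y). x \<in> Zd d \<and> y \<in> Zd d
      \<and> (int i * int y - int j * int x) mod int d = 0 \<and> x \<in> mult_set d i}"

definition C00 :: "nat \<Rightarrow> (nat \<times> nat) set" where
  "C00 d = {(0, y) | y. y \<in> Zd d}"

definition MCS_index :: "nat \<Rightarrow> (nat \<times> nat) set" where
  "MCS_index d = {(i, j). 1 \<le> i \<and> i < d \<and> i dvd d \<and> j \<le> d div i - 1}"

definition MCS_family :: "nat \<Rightarrow> (nat \<times> nat) set set" where
  "MCS_family d = (\<lambda>(i, j). Cset d i j) ` MCS_index d \<union> {C00 d}"

definition sigma_div :: "nat \<Rightarrow> nat" where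
  "sigma_div d = (\<Sum>k \<in> {k. k dvd d \<and> k \<ge> 1}. k)"

end

theory Submission
  imports Defs
begin

text \<open>
  Put g = gcd i d. Since i/g is invertible modulo d/g, the set C(i,j) equals C(g,y0) for a
  suitable y0, i.e. the pairs (a g, y) with y = a y0 modulo d/g. These commute pairwise, there
  are d of them, and anything commuting with (0, d/g) and (g, y0) is already among them.
  Conversely a maximally commutative set is closed under (p, q) \<mapsto> p + k q mod d, so its first
  coordinates are the multiples of their least positive element g, which divides d; the set then
  lies in, hence equals, C(g,y0), and y0 only matters modulo d/g. Counting the pairs
  (g, y0 mod d/g) over the proper divisors g of d, plus C(0,0), gives the sum of d/g over those
  divisors plus 1, which is \<sigma>(d).
\<close>

lemma int_dvd_diff_iff_mod_eq: "int n dvd int a - int b \<longleftrightarrow> a mod n = b mod n"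
  by (simp add: mod_eq_dvd_iff [symmetric] flip: zmod_int)

lemma commutes_iff_dvd:
  "commutes d p q \<longleftrightarrow> int d dvd int (fst p) * int (snd q) - int (snd p) * int (fst q)"
  by (simp add: commutes_def dvd_eq_mod_eq_0)

lemma mult_set_eq_gcd_multiples:
  assumes "0 < i" "0 < d"
  shows "mult_set d i = {x. x < d \<and> gcd i d dvd x}"
proof
  show "mult_set d i \<subseteq> {x. x < d \<and> gcd i d dvd x}"
    using assms by (auto simp: mult_set_def intro!: dvd_mod)
next
  show "{x. x < d \<and> gcd i d dvd x} \<subseteq> mult_set d i"
  proof
    fix x assume "x \<in> {x. x < d \<and> gcd i d dvd x}"
    then obtain m where x: "x < d" "x = gcd i d * m" by auto
    obtain a b where ab: "i * a = d * b + gcd i d" using bezout_nat[of i d] assms by auto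
    have "(i * ((a * m) mod d)) mod d = (i * a * m) mod d"
      by (simp add: mod_mult_right_eq mult.assoc)
    also have "\<dots> = (d * (b * m) + gcd i d * m) mod d" using ab by (simp add: algebra_simps)
    also have "\<dots> = x" using x by simp
    finally show "x \<in> mult_set d i" unfolding mult_set_def Zd_def using assms by force
  qed
qed

lemma mem_Cset_iff:
  assumes "0 < i" "0 < d"
  shows "(x, y) \<in> Cset d i j \<longleftrightarrow>
    x < d \<and> y < d \<and> gcd i d dvd x \<and> int d dvd int i * int y - int j * int x"
proof -
  have "x \<in> mult_set d i \<longleftrightarrow> x < d \<and> gcd i d dvd x"
    using mult_set_eq_gcd_multiples[OF assms] by simp
  then show ?thesis by (simp add: Cset_def Zd_def dvd_eq_mod_eq_0 conj_ac)
qed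

lemma mem_Cset_divisor_iff:
  assumes "0 < d" "g dvd d"
  shows "(x, y) \<in> Cset d g j \<longleftrightarrow>
    x < d \<and> y < d \<and> g dvd x \<and> int (d div g) dvd int y - int j * int (x div g)"
proof -
  have "0 < g" using assms by (auto intro: Nat.gr0I)
  have key: "int d dvd int g * int y - int j * int x \<longleftrightarrow>
      int (d div g) dvd int y - int j * int (x div g)" if "g dvd x"
  proof -
    define c where "c = x div g"
    have "x = g * c" using that by (simp add: c_def)
    then have "int g * int y - int j * int x = (int y - int j * int c) * int g"
      by (simp add: algebra_simps)
    moreover obtain d' where "d = g * d'" using assms(2) by blast
    ultimately show ?thesis using \<open>0 < g\<close> by (simp add: c_def mult.commute)
  qed
  have "gcd g d = g" using assms(2) by simp
  then have "(x, y) \<in> Cset d g j \<longleftrightarrow>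
      x < d \<and> y < d \<and> g dvd x \<and> int d dvd int g * int y - int j * int x"
    using mem_Cset_iff[OF \<open>0 < g\<close> assms(1)] by simp
  then show ?thesis using key by blast
qed

lemma linear_congruence_solvable:
  fixes c n j :: nat
  assumes "coprime c n" "0 < c"
  obtains y0 where "int n dvd int c * int y0 - int j"
proof -
  obtain a b where "c * a = n * b + 1" using bezout_nat[of c n] assms by auto
  then have "int c * int a - 1 = int n * int b"
    by (metis add_diff_cancel_right' of_nat_1 of_nat_add of_nat_mult)
  moreover have "int c * int (j * a) - int j = int j * (int c * int a - 1)"
    by (simp add: algebra_simps)
  ultimately have "int c * int (j * a) - int j = int n * (int j * int b)" by simp
  then show ?thesis using that[of "j * a"] by (metis dvd_triv_left)
qed

lemma coprime_dvd_linear_iff: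
  fixes n c y0 j y a :: int
  assumes "coprime c n" "n dvd c * y0 - j"
  shows "n dvd c * y - j * a \<longleftrightarrow> n dvd y - y0 * a"
proof -
  have "c * y - j * a = c * (y - y0 * a) + a * (c * y0 - j)" by (simp add: algebra_simps)
  then have "n dvd c * y - j * a \<longleftrightarrow> n dvd c * (y - y0 * a)"
    using dvd_add_left_iff[OF dvd_mult[OF assms(2), of a]] by simp
  also have "\<dots> \<longleftrightarrow> n dvd y - y0 * a"
    using assms(1) by (simp add: coprime_commute coprime_dvd_mult_right_iff)
  finally show ?thesis .
qed

lemma Cset_eq_Cset_gcd:
  assumes "0 < i" "0 < d"
  obtains y0 where "Cset d i j = Cset d (gcd i d) y0"
proof -
  define g where "g = gcd i d"
  obtain i' d' where id: "i = i' * g" "d = d' * g" "coprime i' d'"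
    using gcd_coprime_exists[of i d] assms unfolding g_def by (metis gcd_eq_0_iff not_less0)
  have "0 < g" using assms unfolding g_def by simp
  have "0 < i'" using assms(1) id(1) by (metis gr0I mult_zero_left)
  have cop: "coprime (int i') (int d')" using id(3) by simp
  obtain y0 where y0: "int d' dvd int i' * int y0 - int j"
    using linear_congruence_solvable[OF id(3) \<open>0 < i'\<close>] by blast
  have "g dvd d" by (simp add: g_def)
  have "(x, y) \<in> Cset d i j \<longleftrightarrow> (x, y) \<in> Cset d g y0" for x y
  proof -
    have key: "int d dvd int i * int y - int j * int x \<longleftrightarrow>
        int d' dvd int y - int y0 * int (x div g)" if "g dvd x"
    proof -
      define a where "a = x div g"
      have "x = g * a" using that by (simp add: a_def)
      then have "int i * int y - int j * int x = (int i' * int y - int j * int a) * int g"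
        using id(1) by (simp add: algebra_simps)
      then have "int d dvd int i * int y - int j * int x \<longleftrightarrow>
          int d' dvd int i' * int y - int j * int a"
        using id(2) \<open>0 < g\<close> by simp
      also have "\<dots> \<longleftrightarrow> int d' dvd int y - int y0 * int a"
        using cop y0 by (rule coprime_dvd_linear_iff)
      finally show ?thesis by (simp add: a_def)
    qed
    have "(x, y) \<in> Cset d i j \<longleftrightarrow>
        x < d \<and> y < d \<and> g dvd x \<and> int d dvd int i * int y - int j * int x"
      by (simp add: mem_Cset_iff[OF assms] g_def)
    moreover have "(x, y) \<in> Cset d g y0 \<longleftrightarrow>
        x < d \<and> y < d \<and> g dvd x \<and> int d' dvd int y - int y0 * int (x div g)"
      using mem_Cset_divisor_iff[OF assms(2) \<open>g dvd d\<close>] id(2) \<open>0 < g\<close> by simp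
    ultimately show ?thesis using key by blast
  qed
  then have "Cset d i j = Cset d g y0" by auto
  then show ?thesis using that g_def by blast
qed

lemma Cset_divisor_commute:
  assumes "0 < d" "g dvd d" "(x, y) \<in> Cset d g j" "(x', y') \<in> Cset d g j"
  shows "commutes d (x, y) (x', y')"
proof -
  obtain d' where d: "d = g * d'" using assms(2) by blast
  have "0 < g" using assms(1) d by simp
  obtain a a' where x: "x = g * a" "x' = g * a'"
    using assms(3,4) mem_Cset_divisor_iff[OF assms(1,2)] by (meson dvdE)
  have y: "int d' dvd int y - int j * int a" "int d' dvd int y' - int j * int a'"
    using assms(3,4) mem_Cset_divisor_iff[OF assms(1,2)] x d \<open>0 < g\<close> by auto
  have "int a * int y' - int y * int a' =
      int a * (int y' - int j * int a') - int a' * (int y - int j * int a)"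
    by (simp add: algebra_simps)
  then have "int d' dvd int a * int y' - int y * int a'" using y by simp
  then have "int d' * int g dvd (int a * int y' - int y * int a') * int g"
    by (rule mult_dvd_mono) simp
  moreover have "(int a * int y' - int y * int a') * int g = int x * int y' - int y * int x'"
    using x by (simp add: algebra_simps)
  moreover have "int d = int d' * int g" using d by simp
  ultimately show ?thesis by (simp add: commutes_iff_dvd)
qed

lemma Cset_divisor_maximal:
  assumes "g dvd d" "0 < g" "g < d" "u < d" "v < d"
    and comm: "\<forall>q \<in> Cset d g j. commutes d (u, v) q"
  shows "(u, v) \<in> Cset d g j"
proof -
  obtain d' where d: "d = g * d'" using assms(1) by blast
  have "0 < d" "0 < d'" "d' \<le> d" using assms(3) d by auto
  have "d div g = d'" using d \<open>0 < g\<close> by simp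
  note mem = mem_Cset_divisor_iff[OF \<open>0 < d\<close> assms(1), unfolded \<open>d div g = d'\<close>]
  \<comment> \<open>Commuting with (0, d') forces g to divide u; commuting with (g, j mod d') then fixes v mod d'.\<close>
  have "g dvd u"
  proof (cases "g = 1")
    case False
    then have "d' < d" using \<open>0 < g\<close> \<open>0 < d'\<close> d by simp
    then have "(0, d') \<in> Cset d g j" using mem by simp
    then have "int d dvd int u * int d'" using comm by (auto simp: commutes_iff_dvd)
    then show ?thesis using \<open>0 < d'\<close> d by (simp add: mult.commute)
  qed simp
  then obtain a where u: "u = g * a" by blast
  have "j mod d' < d" using \<open>0 < d'\<close> \<open>d' \<le> d\<close> by (meson mod_less_divisor less_le_trans)
  moreover have j: "int d' dvd int (j mod d') - int j"
    by (simp add: int_dvd_diff_iff_mod_eq)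
  ultimately have "(g, j mod d') \<in> Cset d g j" using mem[of g "j mod d'" j] assms(3) \<open>0 < g\<close> by simp
  then have "int d dvd int u * int (j mod d') - int v * int g"
    using comm by (auto simp: commutes_iff_dvd)
  moreover have "int u * int (j mod d') - int v * int g = (int a * int (j mod d') - int v) * int g"
    using u by (simp add: algebra_simps)
  ultimately have v: "int d' dvd int a * int (j mod d') - int v"
    using \<open>0 < g\<close> d by (simp add: mult.commute)
  have "int d' dvd int a * (int (j mod d') - int j) - (int a * int (j mod d') - int v)"
    by (rule dvd_diff[OF dvd_mult[OF j, of "int a"] v])
  also have "int a * (int (j mod d') - int j) - (int a * int (j mod d') - int v) =
      int v - int j * int a"
    by (simp add: algebra_simps)
  finally have "int d' dvd int v - int j * int a" .
  then show ?thesis using mem[of u v j] assms(4,5) u \<open>0 < g\<close> by simp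
qed

lemma card_Cset_divisor:
  assumes "0 < d" "g dvd d"
  shows "card (Cset d g j) = d"
proof -
  obtain d' where d: "d = g * d'" using assms(2) by blast
  have "0 < g" "0 < d'" using assms(1) d by auto
  have "d div g = d'" using d \<open>0 < g\<close> by simp
  have mem: "(x, y) \<in> Cset d g j \<longleftrightarrow>
      x < d \<and> y < d \<and> g dvd x \<and> y mod d' = (j * (x div g)) mod d'" for x y
    using mem_Cset_divisor_iff[OF assms, of x y j]
    by (simp add: \<open>d div g = d'\<close> int_dvd_diff_iff_mod_eq flip: of_nat_mult)
  \<comment> \<open>a is x/g, and t picks one of the g lifts to {..<d} of the residue of y modulo d'.\<close>
  define f where "f = (\<lambda>(a, t). (g * a, (j * a) mod d' + d' * t))"
  have "inj_on f ({..<d'} \<times> {..<g})"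
    by (rule inj_onI) (use \<open>0 < g\<close> \<open>0 < d'\<close> in \<open>auto simp: f_def\<close>)
  moreover have "f ` ({..<d'} \<times> {..<g}) = Cset d g j"
  proof
    show "f ` ({..<d'} \<times> {..<g}) \<subseteq> Cset d g j"
    proof (rule image_subsetI)
      fix p assume "p \<in> {..<d'} \<times> {..<g}"
      then obtain a t where p: "p = (a, t)" "a < d'" "t < g" by blast
      have "(j * a) mod d' + d' * t < d' * (t + 1)" using \<open>0 < d'\<close> by simp
      also have "\<dots> \<le> d' * g" using p(3) by (intro mult_le_mono2) simp
      also have "\<dots> = d" using d by simp
      finally have "(j * a) mod d' + d' * t < d" .
      moreover have "g * a < d" using p(2) \<open>0 < g\<close> d by simp
      ultimately show "f p \<in> Cset d g j" using p(1) \<open>0 < g\<close> by (simp add: f_def mem)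
    qed
    show "Cset d g j \<subseteq> f ` ({..<d'} \<times> {..<g})"
    proof clarify
      fix x y assume "(x, y) \<in> Cset d g j"
      then obtain a where xy: "x = g * a" "y < d" "y mod d' = (j * a) mod d'" "x < d"
        using mem \<open>0 < g\<close> by auto
      have "a < d'" using xy(1,4) d \<open>0 < g\<close> by simp
      moreover have "y div d' < g" using xy(2) d by (simp add: div_less_iff_less_mult mult.commute \<open>0 < d'\<close>)
      moreover have "(x, y) = f (a, y div d')"
        using xy by (simp add: f_def) (metis mod_mult_div_eq)
      ultimately show "(x, y) \<in> f ` ({..<d'} \<times> {..<g})" by blast
    qed
  qed
  ultimately show ?thesis using card_image d by fastforce
qed

lemma is_MCS_Cset_divisor:
  assumes "g dvd d" "0 < g" "g < d"
  shows "is_MCS d (Cset d g j)"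
  unfolding is_MCS_def
proof (intro conjI ballI)
  show "Cset d g j \<subseteq> Zd d \<times> Zd d" by (auto simp: Cset_def)
  show "commutes d p q" if "p \<in> Cset d g j" "q \<in> Cset d g j" for p q
    using Cset_divisor_commute[of d g] assms that by (cases p, cases q) auto
  show "\<not> (\<forall>q \<in> Cset d g j. commutes d p q)" if "p \<in> Zd d \<times> Zd d - Cset d g j" for p
  proof (cases p)
    case (Pair u v)
    then show ?thesis using Cset_divisor_maximal[OF assms, of u v j] that by (auto simp: Zd_def)
  qed
qed

lemma Cset_eq_Cset_proper_divisor:
  assumes "0 < i" "i < d"
  obtains g y0 where "g dvd d" "0 < g" "g < d" "Cset d i j = Cset d g y0"
proof -
  obtain y0 where "Cset d i j = Cset d (gcd i d) y0"
    using Cset_eq_Cset_gcd assms by (metis less_trans)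
  moreover have "0 < gcd i d" "gcd i d < d" using assms by (auto intro: le_less_trans[OF gcd_le1_nat])
  ultimately show ?thesis using that[of "gcd i d" y0] by simp
qed

lemma is_MCS_Cset:
  assumes "0 < i" "i < d"
  shows "is_MCS d (Cset d i j)"
  using Cset_eq_Cset_proper_divisor[OF assms] is_MCS_Cset_divisor by metis

lemma card_Cset:
  assumes "0 < i" "i < d"
  shows "card (Cset d i j) = d"
  using Cset_eq_Cset_proper_divisor[OF assms] card_Cset_divisor by (metis gr_zeroI less_zeroE)

lemma MCS_add_multiple_closed:
  assumes C: "is_MCS d C" and "0 < d" and "(x, y) \<in> C" "(x0, y0) \<in> C"
  shows "((x + k * x0) mod d, (y + k * y0) mod d) \<in> C"
proof (rule ccontr)
  let ?p = "((x + k * x0) mod d, (y + k * y0) mod d)"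
  have int_mod: "int (a mod d) = int a - int d * int (a div d)" for a
    using mod_mult_div_eq[of a d] by (metis add_diff_cancel_right' of_nat_add of_nat_mult)
  assume "?p \<notin> C"
  moreover have "?p \<in> Zd d \<times> Zd d" using \<open>0 < d\<close> by (simp add: Zd_def)
  ultimately obtain r1 r2 where r: "(r1, r2) \<in> C" "\<not> commutes d ?p (r1, r2)"
    using C unfolding is_MCS_def by blast
  have "int d dvd int x * int r2 - int y * int r1" "int d dvd int x0 * int r2 - int y0 * int r1"
    using C assms(3,4) r(1) unfolding is_MCS_def commutes_iff_dvd by (metis fst_conv snd_conv)+
  then have "int d dvd (int x * int r2 - int y * int r1) + int k * (int x0 * int r2 - int y0 * int r1)"
    by simp
  moreover have "int ((x + k * x0) mod d) * int r2 - int ((y + k * y0) mod d) * int r1 =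
      (int x * int r2 - int y * int r1) + int k * (int x0 * int r2 - int y0 * int r1)
      - int d * (int ((x + k * x0) div d) * int r2 - int ((y + k * y0) div d) * int r1)"
    unfolding int_mod[of "x + k * x0"] int_mod[of "y + k * y0"] by (simp add: algebra_simps)
  ultimately have "commutes d ?p (r1, r2)" by (simp add: commutes_iff_dvd)
  then show False using r(2) by simp
qed

lemma is_MCS_subset_imp_eq:
  assumes "is_MCS d C" "is_MCS d D" "C \<subseteq> D"
  shows "C = D"
  using assms unfolding is_MCS_def by blast

lemma is_MCS_C00:
  assumes "2 \<le> d"
  shows "is_MCS d (C00 d)"
  unfolding is_MCS_def
proof (intro conjI ballI)
  show "C00 d \<subseteq> Zd d \<times> Zd d" using assms by (auto simp: C00_def Zd_def)
  show "commutes d p q" if "p \<in> C00 d" "q \<in> C00 d" for p q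
    using that by (auto simp: C00_def commutes_def)
  show "\<not> (\<forall>q \<in> C00 d. commutes d p q)" if "p \<in> Zd d \<times> Zd d - C00 d" for p
  proof
    assume "\<forall>q \<in> C00 d. commutes d p q"
    moreover have "(0, 1) \<in> C00 d" using assms by (auto simp: C00_def Zd_def)
    ultimately have "int d dvd int (fst p)" by (auto simp: commutes_iff_dvd)
    moreover have "0 < fst p" "fst p < d" using that by (auto simp: C00_def Zd_def)
    ultimately show False by (auto dest: zdvd_imp_le)
  qed
qed

lemma least_positive_dvd_if_mod_closed:
  fixes S :: "nat set"
  assumes closed: "\<And>x k. x \<in> S \<Longrightarrow> (x + k * g) mod d \<in> S"
    and "S \<subseteq> {..<d}" "g \<in> S" "0 < g"
    and least: "\<And>x. x \<in> S \<Longrightarrow> 0 < x \<Longrightarrow> g \<le> x"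
  shows "g dvd d" "\<forall>x \<in> S. g dvd x"
proof -
  have "g < d" using assms(2,3) by auto
  show "g dvd d"
  proof (rule ccontr)
    assume "\<not> g dvd d"
    then have r: "0 < d mod g" "d mod g < g" using \<open>0 < g\<close> by (auto simp: mod_greater_zero_iff_not_dvd)
    have "g + (d div g) * g = d + (g - d mod g)"
      using div_mult_mod_eq[of d g] r by linarith
    then have "(g + (d div g) * g) mod d = g - d mod g" using \<open>g < d\<close> by simp
    then have "g - d mod g \<in> S" using closed[OF \<open>g \<in> S\<close>] by metis
    then show False using least r by fastforce
  qed
  show "\<forall>x \<in> S. g dvd x"
  proof
    fix x assume "x \<in> S"
    then have "x < d" using assms(2) by auto
    \<comment> \<open>Adding d - x div g copies of g turns x into x mod g modulo d.\<close>
    then have "x div g \<le> d" using div_le_dividend[of x g] by linarith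
    then have "(d - x div g) * g + x div g * g = d * g"
      by (metis add_mult_distrib le_add_diff_inverse2)
    then have "x + (d - x div g) * g = x mod g + d * g"
      using div_mult_mod_eq[of x g] by linarith
    then have "(x + (d - x div g) * g) mod d = x mod g"
      using \<open>0 < g\<close> \<open>g < d\<close> by (simp add: less_trans[OF mod_less_divisor])
    then have "x mod g \<in> S" using closed[OF \<open>x \<in> S\<close>] by metis
    then show "g dvd x" using least[of "x mod g"] mod_less_divisor[OF \<open>0 < g\<close>, of x]
      by (auto simp: mod_greater_zero_iff_not_dvd)
  qed
qed

lemma mem_MCS_index_iff:
  "(i, j) \<in> MCS_index d \<longleftrightarrow> 0 < i \<and> i < d \<and> i dvd d \<and> j < d div i"
proof -
  have "0 < d div i" if "0 < i" "i < d" "i dvd d" using that by (simp add: div_greater_zero_iff dvd_imp_le)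
  then show ?thesis unfolding MCS_index_def by auto
qed

lemma Cset_mod_eq:
  assumes "0 < d" "g dvd d"
  shows "Cset d g (j mod (d div g)) = Cset d g j"
proof -
  have "y mod (d div g) = (j mod (d div g) * a) mod (d div g) \<longleftrightarrow>
      y mod (d div g) = (j * a) mod (d div g)" for y a
    by (simp add: mod_mult_left_eq)
  then show ?thesis
    by (auto simp: mem_Cset_divisor_iff[OF assms] int_dvd_diff_iff_mod_eq simp flip: of_nat_mult)
qed

lemma MCS_cases:
  assumes C: "is_MCS d C" and "2 \<le> d"
  shows "C = C00 d \<or> (\<exists>(g, j) \<in> MCS_index d. C = Cset d g j)"
proof -
  have C_Zd: "C \<subseteq> {..<d} \<times> {..<d}" and C_comm: "\<forall>p \<in> C. \<forall>q \<in> C. commutes d p q"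
    using C unfolding is_MCS_def Zd_def by auto
  show ?thesis
  proof (cases "fst ` C \<subseteq> {0}")
    case True
    then have "C \<subseteq> C00 d" using C_Zd by (force simp: C00_def Zd_def)
    then show ?thesis using is_MCS_subset_imp_eq[OF C is_MCS_C00[OF \<open>2 \<le> d\<close>]] by blast
  next
    case False
    have "0 < d" using \<open>2 \<le> d\<close> by simp
    define S where "S = fst ` C"
    have "S \<subseteq> {..<d}" using C_Zd unfolding S_def by auto
    obtain x where "x \<in> S \<and> 0 < x" using False unfolding S_def by blast
    define g where "g = (LEAST x. x \<in> S \<and> 0 < x)"
    have "g \<in> S \<and> 0 < g" unfolding g_def using \<open>x \<in> S \<and> 0 < x\<close> by (rule LeastI)
    then have "g \<in> S" "0 < g" by auto
    then obtain y0 where "(g, y0) \<in> C" unfolding S_def by force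
    have closed: "(x + k * g) mod d \<in> S" if x: "x \<in> S" for x k
    proof -
      obtain y where "(x, y) \<in> C" using x unfolding S_def by force
      from MCS_add_multiple_closed[OF C \<open>0 < d\<close> this \<open>(g, y0) \<in> C\<close>, of k]
      show ?thesis unfolding S_def by force
    qed
    have least: "g \<le> x" if "x \<in> S" "0 < x" for x
      unfolding g_def using that by (simp add: Least_le)
    note g_dvd = least_positive_dvd_if_mod_closed[OF closed \<open>S \<subseteq> {..<d}\<close> \<open>g \<in> S\<close> \<open>0 < g\<close> least]
    have "g < d" using \<open>g \<in> S\<close> \<open>S \<subseteq> {..<d}\<close> by auto
    have "C \<subseteq> Cset d g y0"
    proof clarify
      fix x y assume "(x, y) \<in> C"
      then have "x < d" "y < d" "g dvd x" "commutes d (g, y0) (x, y)"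
        using C_Zd C_comm \<open>(g, y0) \<in> C\<close> g_dvd(2) unfolding S_def by auto
      then show "(x, y) \<in> Cset d g y0"
        using mem_Cset_iff[OF \<open>0 < g\<close> \<open>0 < d\<close>] g_dvd(1)
        by (simp add: commutes_iff_dvd gcd_nat.absorb1)
    qed
    then have "C = Cset d g y0"
      using is_MCS_subset_imp_eq[OF C is_MCS_Cset_divisor[OF g_dvd(1) \<open>0 < g\<close> \<open>g < d\<close>]] by blast
    also have "\<dots> = Cset d g (y0 mod (d div g))" using Cset_mod_eq[OF \<open>0 < d\<close> g_dvd(1)] by simp
    finally have "C = Cset d g (y0 mod (d div g))" .
    moreover have "(g, y0 mod (d div g)) \<in> MCS_index d"
      using \<open>0 < g\<close> \<open>g < d\<close> g_dvd(1) by (simp add: mem_MCS_index_iff div_greater_zero_iff dvd_imp_le)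
    ultimately show ?thesis by blast
  qed
qed

lemma sum_divisors_reindex_div:
  fixes d :: nat
  assumes "0 < d"
  shows "(\<Sum>k \<in> {k. k dvd d \<and> 1 \<le> k}. f k) = (\<Sum>i \<in> {i. i dvd d \<and> 1 \<le> i}. f (d div i))"
proof (rule sum.reindex_bij_witness[where i = "\<lambda>i. d div i" and j = "\<lambda>k. d div k"])
  have div_div: "d div (d div k) = k" if "k dvd d" for k
    using that assms by (metis dvd_mult_div_cancel dvd_div_mult_self mult_is_0 nonzero_mult_div_cancel_right neq0_conv)
  have div_mem: "d div k \<in> {k. k dvd d \<and> 1 \<le> k}" if "k \<in> {k. k dvd d \<and> 1 \<le> k}" for k
    using that assms by (auto simp: div_greater_zero_iff dvd_imp_le Suc_le_eq elim!: dvdE)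
  show "d div (d div k) = k" "d div k \<in> {k. k dvd d \<and> 1 \<le> k}" if "k \<in> {k. k dvd d \<and> 1 \<le> k}" for k
    using that div_div div_mem by auto
  show "d div (d div i) = i" "d div i \<in> {k. k dvd d \<and> 1 \<le> k}" if "i \<in> {i. i dvd d \<and> 1 \<le> i}" for i
    using that div_div div_mem by auto
  show "f (d div (d div i)) = f i" if "i \<in> {i. i dvd d \<and> 1 \<le> i}" for i
    using that div_div by auto
qed

lemma card_MCS_index:
  assumes "0 < d"
  shows "card (MCS_index d) + 1 = sigma_div d"
proof -
  define I where "I = {i. 0 < i \<and> i < d \<and> i dvd d}"
  have "finite I" unfolding I_def by (rule finite_subset[of _ "{..<d}"]) auto
  have "MCS_index d = (SIGMA i:I. {..<d div i})" by (auto simp: I_def mem_MCS_index_iff)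
  then have "card (MCS_index d) = (\<Sum>i \<in> I. d div i)" using \<open>finite I\<close> by simp
  have "sigma_div d = (\<Sum>i \<in> {i. i dvd d \<and> 1 \<le> i}. d div i)"
    unfolding sigma_div_def using sum_divisors_reindex_div[OF assms, of "\<lambda>k. k"] by simp
  also have "{i. i dvd d \<and> 1 \<le> i} = insert d I" using assms by (auto simp: I_def dvd_imp_le)
  also have "(\<Sum>i \<in> insert d I. d div i) = (\<Sum>i \<in> I. d div i) + 1"
    using \<open>finite I\<close> assms by (simp add: I_def)
  finally show ?thesis using \<open>card (MCS_index d) = (\<Sum>i \<in> I. d div i)\<close> by simp
qed

lemma MCS_index_mem_Cset:
  assumes "(i, j) \<in> MCS_index d"
  shows "(i, j) \<in> Cset d i j"
proof -
  have "0 < i" "i < d" "i dvd d" "j < d div i" using assms by (auto simp: mem_MCS_index_iff)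
  moreover have "j < d" using \<open>j < d div i\<close> div_le_dividend[of d i] by linarith
  ultimately show ?thesis by (simp add: mem_Cset_divisor_iff)
qed

lemma inj_on_Cset_MCS_index: "inj_on (\<lambda>(i, j). Cset d i j) (MCS_index d)"
proof (rule inj_onI, clarify)
  fix i j i' j'
  assume idx: "(i, j) \<in> MCS_index d" "(i', j') \<in> MCS_index d" and eq: "Cset d i j = Cset d i' j'"
  then have i: "0 < i" "i < d" "i dvd d" "j < d div i" and i': "0 < i'" "i' dvd d" "j' < d div i'"
    by (auto simp: mem_MCS_index_iff)
  have "0 < d" using i by simp
  have "(i, j) \<in> Cset d i' j'" using MCS_index_mem_Cset[OF idx(1)] eq by simp
  then have "i' dvd i" using mem_Cset_divisor_iff[OF \<open>0 < d\<close> i'(2)] by blast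
  have "(i', j') \<in> Cset d i j" using MCS_index_mem_Cset[OF idx(2)] eq by simp
  then have "i dvd i'" using mem_Cset_divisor_iff[OF \<open>0 < d\<close> i(3)] by blast
  with \<open>i' dvd i\<close> have "i = i'" by (simp add: dvd_antisym)
  then have "(i, j) \<in> Cset d i j'" using MCS_index_mem_Cset[OF idx(1)] eq by simp
  then have "int (d div i) dvd int j - int j'"
    using mem_Cset_divisor_iff[OF \<open>0 < d\<close> i(3)] \<open>0 < i\<close> by simp
  then have "j mod (d div i) = j' mod (d div i)" by (simp add: int_dvd_diff_iff_mod_eq)
  then show "i = i' \<and> j = j'" using i i' \<open>i = i'\<close> by simp
qed

lemma C00_notin_Cset_image: "C00 d \<notin> (\<lambda>(i, j). Cset d i j) ` MCS_index d"
proof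
  assume "C00 d \<in> (\<lambda>(i, j). Cset d i j) ` MCS_index d"
  then obtain i j where "(i, j) \<in> MCS_index d" "C00 d = Cset d i j" by auto
  then have "(i, j) \<in> C00 d" "0 < i" using MCS_index_mem_Cset by (auto simp: mem_MCS_index_iff)
  then show False by (simp add: C00_def)
qed

lemma MCS_family_eq:
  assumes "2 \<le> d"
  shows "MCS_family d = {C. is_MCS d C}"
proof
  show "MCS_family d \<subseteq> {C. is_MCS d C}"
  proof
    fix C assume "C \<in> MCS_family d"
    then consider "C = C00 d" | i j where "(i, j) \<in> MCS_index d" "C = Cset d i j"
      unfolding MCS_family_def by auto
    then show "C \<in> {C. is_MCS d C}"
    proof cases
      case 1
      then show ?thesis using is_MCS_C00[OF assms] by simp
    next
      case 2
      then show ?thesis using is_MCS_Cset[of i d j] by (simp add: mem_MCS_index_iff)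
    qed
  qed
  show "{C. is_MCS d C} \<subseteq> MCS_family d"
  proof
    fix C assume "C \<in> {C. is_MCS d C}"
    then have "C = C00 d \<or> (\<exists>(i, j) \<in> MCS_index d. C = Cset d i j)"
      using MCS_cases assms by simp
    then show "C \<in> MCS_family d" unfolding MCS_family_def by force
  qed
qed

lemma MCS_index_subset: "MCS_index d \<subseteq> {0<..<d} \<times> {..<d}"
proof
  fix p assume "p \<in> MCS_index d"
  then obtain i j where "p = (i, j)" "0 < i" "i < d" "j < d div i"
    by (cases p) (auto simp: mem_MCS_index_iff)
  moreover have "j < d" using \<open>j < d div i\<close> div_le_dividend[of d i] by linarith
  ultimately show "p \<in> {0<..<d} \<times> {..<d}" by simp
qed

lemma MCS_eq_C00_or_Cset:
  assumes "is_MCS d C" "2 \<le> d"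
  shows "C = C00 d \<or> (\<exists>i\<in>Zd d. \<exists>j\<in>Zd d. i \<noteq> 0 \<and> C = Cset d i j)"
  using MCS_cases[OF assms]
proof
  assume "\<exists>(i, j) \<in> MCS_index d. C = Cset d i j"
  then obtain i j where "(i, j) \<in> {0<..<d} \<times> {..<d}" "C = Cset d i j"
    using MCS_index_subset by blast
  moreover from this(1) have "i \<in> Zd d" "j \<in> Zd d" "i \<noteq> 0" by (auto simp: Zd_def)
  ultimately show ?thesis by blast
qed simp

lemma card_MCS:
  assumes "2 \<le> d"
  shows "card {C. is_MCS d C} = sigma_div d"
proof -
  have "card {C. is_MCS d C} = card ((\<lambda>(i, j). Cset d i j) ` MCS_index d) + 1"
    using C00_notin_Cset_image finite_subset[OF MCS_index_subset]
    by (simp add: MCS_family_eq[OF assms, symmetric] MCS_family_def)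
  also have "\<dots> = sigma_div d"
    using card_image[OF inj_on_Cset_MCS_index] card_MCS_index assms by simp
  finally show ?thesis .
qed

theorem theorem3:
  fixes d :: nat
  assumes "d \<ge> 3"
  shows "(\<forall>i\<in>Zd d. \<forall>j\<in>Zd d. i \<noteq> 0 \<longrightarrow> is_MCS d (Cset d i j) \<and> card (Cset d i j) = d)
    \<and> (\<forall>C. is_MCS d C \<longrightarrow> C = C00 d \<or> (\<exists>i\<in>Zd d. \<exists>j\<in>Zd d. i \<noteq> 0 \<and> C = Cset d i j))
    \<and> inj_on (\<lambda>(i, j). Cset d i j) (MCS_index d)
    \<and> C00 d \<notin> (\<lambda>(i, j). Cset d i j) ` MCS_index d
    \<and> MCS_family d = {C. is_MCS d C}
    \<and> card {C. is_MCS d C} = sigma_div d"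
proof -
  have "2 \<le> d" using assms by simp
  then show ?thesis
    using is_MCS_Cset card_Cset MCS_eq_C00_or_Cset inj_on_Cset_MCS_index C00_notin_Cset_image
      MCS_family_eq card_MCS
    by (simp add: Zd_def)
qed

end
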